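(* Fix $1\leq p<\infty$ with $p\neq 2$ and set $c_p:=1-p/2$. Then $\|1+\varepsilon(z_1+z_2)+c_p\varepsilon^2z_1z_2\|_p<\|1+\varepsilon(z_1+z_2)\|_p$ for every sufficiently small $\varepsilon>0$, where $\|\cdot\|_p$ is the norm of $L^p(\mathbb{T}^2)$. Moreover, $\|1+z_1+z_2-z_1z_2\|_\infty<\|1+z_1+z_2\|_\infty$, with the norm of $L^\infty(\mathbb{T}^2)$.
   Context: $\mathbb{T}^2$ is the 2-dimensional torus with normalized Haar measure, and $(z_1,z_2)$ denote its coordinates. *)

theory Defs
  imports "HOL-Probability.Probability"
begin

definition T2_param :: "real \<times> real \<Rightarrow> complex \<times> complex" where
  "T2_param = (\<lambda>(s,t). (cis s, cis t))"

definition haar_T2 :: "(complex \<times> complex) measure" where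
  "haar_T2 = distr (uniform_measure lborel {0..2*pi} \<Otimes>\<^sub>M uniform_measure lborel {0..2*pi})
                   (borel \<Otimes>\<^sub>M borel) T2_param"

definition Lp_norm_T2 :: "real \<Rightarrow> (complex \<times> complex \<Rightarrow> complex) \<Rightarrow> real" where
  "Lp_norm_T2 p f = (\<integral>z. cmod (f z) powr p \<partial>haar_T2) powr (1/p)"

definition Linf_norm_T2 :: "(complex \<times> complex \<Rightarrow> complex) \<Rightarrow> ereal" where
  "Linf_norm_T2 f = esssup haar_T2 (\<lambda>z. ereal (cmod (f z)))"

end

theory Submission
  imports Defs
begin

(* Write q = p/2 and c = 1 - q, and parametrise the torus by z = (cis s, cis t).  Then
   |1 + e(z1 + z2)|^2 = X := 1 + 2e Re(z1 + z2) + e^2 |z1 + z2|^2, and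
   |1 + e(z1 + z2) + c e^2 z1 z2|^2 = X + h with h := 2c e^2 (Re(z1 z2) + e Re(z1 + z2)) + c^2 e^4.
   Taylor expansion of t powr q around 1 writes (X + h) powr q - X powr q, uniformly on the torus
   and up to O(e^5), as an explicit trigonometric polynomial whose mean over the torus is
   q^2 c (c + 2q - 2) e^4.  For c = 1 - q this is -q^2 (1 - q)^2 e^4 < 0 because p /= 2, so the
   p-th powers of the two L^p norms, hence the norms, compare strictly for small e > 0.

   For the sup norms, |1 + z1 + z2 - z1 z2|^2 = 4 + 4 sin s sin t <= 8 < 2.9^2 everywhere, while
   |1 + z1 + z2| > 2.9 near (1, 1), i.e. on a set of positive Haar measure. *)

section \<open>Taylor expansion of real powers\<close>

definition powr_deriv :: "real \<Rightarrow> nat \<Rightarrow> real \<Rightarrow> real" where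
  "powr_deriv r m t = (\<Prod>i<m. r - real i) * t powr (r - real m)"

lemma DERIV_powr_deriv:
  assumes "t > 0"
  shows "DERIV (powr_deriv r m) t :> powr_deriv r (Suc m) t"
proof -
  have "DERIV (powr_deriv r m) t :> (\<Prod>i<m. r - real i) * ((r - real m) * t powr (r - real m - 1))"
    unfolding powr_deriv_def by (intro DERIV_cmult has_real_derivative_powr assms)
  then show ?thesis
    by (simp add: powr_deriv_def algebra_simps)
qed

lemma powr_le_max_endpoints:
  fixes a b t s :: real
  assumes "0 < a" "a \<le> t" "t \<le> b"
  shows "t powr s \<le> max (a powr s) (b powr s)"
proof (cases "s \<ge> 0")
  case True
  then have "t powr s \<le> b powr s" using assms by (intro powr_mono2) auto
  then show ?thesis by simp
next
  case False
  then have "t powr s \<le> a powr s" using assms by (intro powr_mono2') auto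
  then show ?thesis by simp
qed

lemma powr_taylor_remainder:
  fixes a b r :: real and n :: nat
  assumes "n > 0" "0 < a"
  obtains K where "K \<ge> 0"
    "\<And>c x. c \<in> {a..b} \<Longrightarrow> x \<in> {a..b} \<Longrightarrow>
       \<bar>x powr r - (\<Sum>m<n. powr_deriv r m c / fact m * (x - c)^m)\<bar> \<le> K * \<bar>x - c\<bar>^n"
proof
  define M where "M = max (a powr (r - real n)) (b powr (r - real n))"
  have "M \<ge> 0" by (simp add: M_def le_max_iff_disj)
  then show "\<bar>\<Prod>i<n. r - real i\<bar> / fact n * M \<ge> 0" by simp
  fix c x assume c: "c \<in> {a..b}" and x: "x \<in> {a..b}"
  show "\<bar>x powr r - (\<Sum>m<n. powr_deriv r m c / fact m * (x - c)^m)\<bar>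
      \<le> \<bar>\<Prod>i<n. r - real i\<bar> / fact n * M * \<bar>x - c\<bar>^n"
  proof (cases "x = c")
    case True
    then show ?thesis
      using \<open>n > 0\<close> by (cases n) (simp_all add: powr_deriv_def sum.lessThan_Suc_shift)
  next
    case False
    have "\<exists>t. (if x < c then x < t \<and> t < c else c < t \<and> t < x) \<and>
        x powr r = (\<Sum>m<n. powr_deriv r m c / fact m * (x - c)^m)
                   + powr_deriv r n t / fact n * (x - c)^n"
      by (rule Taylor[where f="\<lambda>x. x powr r" and a=a and b=b])
        (use assms c x False in \<open>auto simp: fun_eq_iff powr_deriv_def[of _ 0] intro!: DERIV_powr_deriv\<close>)
    then obtain t where t: "if x < c then x < t \<and> t < c else c < t \<and> t < x"
      and taylor: "x powr r = (\<Sum>m<n. powr_deriv r m c / fact m * (x - c)^m)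
                             + powr_deriv r n t / fact n * (x - c)^n"
      by blast
    have t_ab: "a \<le> t" "t \<le> b" using t c x by (auto split: if_splits)
    have "\<bar>x powr r - (\<Sum>m<n. powr_deriv r m c / fact m * (x - c)^m)\<bar>
        = \<bar>\<Prod>i<n. r - real i\<bar> / fact n * t powr (r - real n) * \<bar>x - c\<bar>^n"
      using taylor t_ab by (simp add: powr_deriv_def abs_mult power_abs)
    also have "\<dots> \<le> \<bar>\<Prod>i<n. r - real i\<bar> / fact n * M * \<bar>x - c\<bar>^n"
      unfolding M_def using assms t_ab
      by (intro mult_right_mono mult_left_mono powr_le_max_endpoints) auto
    finally show ?thesis .
  qed
qed

lemma powr_second_order_expansion:
  fixes q :: real
  obtains K where "K \<ge> 0"
    "\<And>D h. \<bar>D\<bar> \<le> 1/2 \<Longrightarrow> \<bar>h\<bar> \<le> 1/4 \<Longrightarrow>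
       \<bar>(1 + D + h) powr q - (1 + D) powr q
          - (q * (1 + (q - 1) * D + (q - 1) * (q - 2) / 2 * D^2) * h + q * (q - 1) / 2 * h^2)\<bar>
       \<le> K * (\<bar>D\<bar>^3 * \<bar>h\<bar> + \<bar>D\<bar> * h^2 + \<bar>h\<bar>^3)"
proof -
  obtain K1 where K1: "K1 \<ge> 0" "\<And>c x. c \<in> {1/4..2} \<Longrightarrow> x \<in> {1/4..2} \<Longrightarrow>
      \<bar>x powr q - (\<Sum>m<3. powr_deriv q m c / fact m * (x - c)^m)\<bar> \<le> K1 * \<bar>x - c\<bar>^3"
    using powr_taylor_remainder[of 3 "1/4" 2 q] by auto
  obtain K2 where K2: "K2 \<ge> 0" "\<And>c x. c \<in> {1/4..2} \<Longrightarrow> x \<in> {1/4..2} \<Longrightarrow>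
      \<bar>x powr (q - 1) - (\<Sum>m<3. powr_deriv (q - 1) m c / fact m * (x - c)^m)\<bar> \<le> K2 * \<bar>x - c\<bar>^3"
    using powr_taylor_remainder[of 3 "1/4" 2 "q - 1"] by auto
  obtain K3 where K3: "K3 \<ge> 0" "\<And>c x. c \<in> {1/4..2} \<Longrightarrow> x \<in> {1/4..2} \<Longrightarrow>
      \<bar>x powr (q - 2) - (\<Sum>m<1. powr_deriv (q - 2) m c / fact m * (x - c)^m)\<bar> \<le> K3 * \<bar>x - c\<bar>^1"
    using powr_taylor_remainder[of 1 "1/4" 2 "q - 2"] by auto
  define K where "K = \<bar>q\<bar> * K2 + \<bar>q * (q - 1) / 2\<bar> * K3 + K1"
  show thesis
  proof
    show "K \<ge> 0" unfolding K_def using K1 K2 K3 by simp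
    fix D h :: real assume D: "\<bar>D\<bar> \<le> 1/2" and h: "\<bar>h\<bar> \<le> 1/4"
    define X where "X = 1 + D"
    have X: "X \<in> {1/4..2}" "X + h \<in> {1/4..2}" "1 \<in> {1/4..2::real}"
      using D h unfolding X_def by auto
    define E1 where "E1 = (X + h) powr q - (X powr q + q * X powr (q - 1) * h + q * (q - 1) / 2 * X powr (q - 2) * h^2)"
    define E2 where "E2 = X powr (q - 1) - (1 + (q - 1) * D + (q - 1) * (q - 2) / 2 * D^2)"
    define E3 where "E3 = X powr (q - 2) - 1"
    have E1: "\<bar>E1\<bar> \<le> K1 * \<bar>h\<bar>^3"
      using K1(2)[OF X(1,2)] by (simp add: E1_def powr_deriv_def eval_nat_numeral algebra_simps)
    have E2: "\<bar>E2\<bar> \<le> K2 * \<bar>D\<bar>^3"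
      using K2(2)[OF X(3,1)] by (simp add: E2_def X_def powr_deriv_def eval_nat_numeral algebra_simps)
    have E3: "\<bar>E3\<bar> \<le> K3 * \<bar>D\<bar>"
      using K3(2)[OF X(3,1)] by (simp add: E3_def X_def powr_deriv_def)
    have "(1 + D + h) powr q - (1 + D) powr q
          - (q * (1 + (q - 1) * D + (q - 1) * (q - 2) / 2 * D^2) * h + q * (q - 1) / 2 * h^2)
        = E1 + q * E2 * h + q * (q - 1) / 2 * E3 * h^2"
      unfolding E1_def E2_def E3_def X_def by (simp add: algebra_simps)
    also have "\<bar>\<dots>\<bar> \<le> \<bar>E1\<bar> + \<bar>q\<bar> * \<bar>E2\<bar> * \<bar>h\<bar> + \<bar>q * (q - 1) / 2\<bar> * \<bar>E3\<bar> * h^2"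
      using abs_triangle_ineq[of "E1 + q * E2 * h" "q * (q - 1) / 2 * E3 * h^2"]
        abs_triangle_ineq[of E1 "q * E2 * h"]
      by (simp add: abs_mult)
    also have "\<dots> \<le> K1 * \<bar>h\<bar>^3 + \<bar>q\<bar> * (K2 * \<bar>D\<bar>^3) * \<bar>h\<bar> + \<bar>q * (q - 1) / 2\<bar> * (K3 * \<bar>D\<bar>) * h^2"
      using E1 E2 E3 by (intro add_mono mult_right_mono mult_left_mono) auto
    also have "\<dots> = (\<bar>q\<bar> * K2) * (\<bar>D\<bar>^3 * \<bar>h\<bar>) + (\<bar>q * (q - 1) / 2\<bar> * K3) * (\<bar>D\<bar> * h^2) + K1 * \<bar>h\<bar>^3"
      by (simp add: algebra_simps)
    also have "\<dots> \<le> K * (\<bar>D\<bar>^3 * \<bar>h\<bar>) + K * (\<bar>D\<bar> * h^2) + K * \<bar>h\<bar>^3"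
      unfolding K_def using K1 K2 K3 by (intro add_mono mult_right_mono) auto
    finally show "\<bar>(1 + D + h) powr q - (1 + D) powr q
          - (q * (1 + (q - 1) * D + (q - 1) * (q - 2) / 2 * D^2) * h + q * (q - 1) / 2 * h^2)\<bar>
       \<le> K * (\<bar>D\<bar>^3 * \<bar>h\<bar> + \<bar>D\<bar> * h^2 + \<bar>h\<bar>^3)"
      by (simp add: distrib_left)
  qed
qed

section \<open>The fourth-order expansion of the perturbed power\<close>

(* The terms of degree at most 4 in e in expansion_split below; on the torus, a, b and n stand
   for Re(z1 + z2), Re(z1 z2) and |z1 + z2|^2. *)
definition expansion_main :: "real \<Rightarrow> real \<Rightarrow> real \<Rightarrow> real \<Rightarrow> real \<Rightarrow> real \<Rightarrow> real" where
  "expansion_main q c e a b n =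
     2*c*q*e^2*b + 2*c*q*e^3*a + q*c^2*e^4 + 4*c*q*(q-1)*e^3*a*b + 4*c*q*(q-1)*e^4*a^2
     + 2*c*q*(q-1)*e^4*n*b + 4*c*q*(q-1)*(q-2)*e^4*a^2*b + 2*q*(q-1)*c^2*e^4*b^2"

definition expansion_rest :: "real \<Rightarrow> real \<Rightarrow> real \<Rightarrow> real \<Rightarrow> real \<Rightarrow> real \<Rightarrow> real" where
  "expansion_rest q c e a b n =
     q*(q-1)*(2*c^2*a + 2*c*n*a + c^2*e*n)
     + q*(q-1)*(q-2)/2*(4*a^2*(2*c*a + c^2*e) + (4*a*n + e*n^2)*(2*c*b + 2*c*e*a + c^2*e^2))
     + q*(q-1)/2*(2*c*a + c^2*e)*(4*c*b + 2*c*e*a + c^2*e^2)"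

lemma expansion_split:
  fixes q c e a b n :: real
  defines "D \<equiv> 2*e*a + e^2*n" and "h \<equiv> 2*c*e^2*(b + e*a) + c^2*e^4"
  shows "q * (1 + (q - 1) * D + (q - 1) * (q - 2) / 2 * D^2) * h + q * (q - 1) / 2 * h^2
       = expansion_main q c e a b n + e^5 * expansion_rest q c e a b n"
  unfolding D_def h_def expansion_main_def expansion_rest_def
  by (simp add: field_simps) (simp add: algebra_simps eval_nat_numeral)

lemma expansion_rest_bounded:
  fixes q c :: real
  obtains B where "\<And>e a b n. 0 \<le> e \<Longrightarrow> e \<le> 1 \<Longrightarrow> \<bar>a\<bar> \<le> 2 \<Longrightarrow> \<bar>b\<bar> \<le> 1 \<Longrightarrow> \<bar>n\<bar> \<le> 4 \<Longrightarrow>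
    \<bar>expansion_rest q c e a b n\<bar> \<le> B"
proof -
  let ?S = "{0..1} \<times> {-2..2} \<times> {-1..1} \<times> {-4..4::real}"
  have "continuous_on ?S (\<lambda>(e, a, b, n). expansion_rest q c e a b n)"
    unfolding expansion_rest_def case_prod_unfold by (intro continuous_intros) auto
  then obtain B where "\<And>x. x \<in> ?S \<Longrightarrow> norm ((\<lambda>(e, a, b, n). expansion_rest q c e a b n) x) \<le> B"
    using continuous_on_compact_bound[of ?S] by (metis compact_Icc compact_Times)
  then show thesis
    by (intro that[of B]) (fastforce simp: abs_le_iff)
qed

lemma perturbation_size:
  fixes e a b n c :: real
  assumes "0 \<le> e" "e \<le> 1/16" "e * (6 * \<bar>c\<bar> + c^2) \<le> 1/4"
    and "\<bar>a\<bar> \<le> 2" "\<bar>b\<bar> \<le> 1" "\<bar>n\<bar> \<le> 4"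
  shows "\<bar>2*e*a + e^2*n\<bar> \<le> 8 * e" "\<bar>2*e*a + e^2*n\<bar> \<le> 1/2"
    and "\<bar>2*c*e^2*(b + e*a) + c^2*e^4\<bar> \<le> (6 * \<bar>c\<bar> + c^2) * e^2"
    and "\<bar>2*c*e^2*(b + e*a) + c^2*e^4\<bar> \<le> 1/4"
proof -
  have "e^2 \<le> e"
    using assms(1,2) by (simp add: power2_eq_square mult_left_le_one_le)
  have "e^4 \<le> e^2"
    using assms(1,2) by (intro power_decreasing) auto
  have "\<bar>2*e*a + e^2*n\<bar> \<le> 2 * e * \<bar>a\<bar> + e^2 * \<bar>n\<bar>"
    using assms(1) abs_triangle_ineq[of "2*e*a" "e^2*n"] by (simp add: abs_mult)
  also have "\<dots> \<le> 2 * e * 2 + e * 4"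
    using assms \<open>e^2 \<le> e\<close> by (intro add_mono mult_mono) auto
  finally show "\<bar>2*e*a + e^2*n\<bar> \<le> 8 * e" "\<bar>2*e*a + e^2*n\<bar> \<le> 1/2"
    using assms(2) by simp_all
  have "e * \<bar>a\<bar> \<le> 1 * 2"
    using assms by (intro mult_mono) auto
  then have "\<bar>b + e*a\<bar> \<le> 3"
    using assms(1,5) abs_triangle_ineq[of b "e*a"] by (simp add: abs_mult)
  have "\<bar>2*c*e^2*(b + e*a) + c^2*e^4\<bar> \<le> 2 * \<bar>c\<bar> * e^2 * \<bar>b + e*a\<bar> + c^2 * e^4"
    using abs_triangle_ineq[of "2*c*e^2*(b + e*a)" "c^2*e^4"] by (simp add: abs_mult)
  also have "\<dots> \<le> 2 * \<bar>c\<bar> * e^2 * 3 + c^2 * e^2"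
    using \<open>\<bar>b + e*a\<bar> \<le> 3\<close> \<open>e^4 \<le> e^2\<close> by (intro add_mono mult_left_mono) auto
  also have "\<dots> = (6 * \<bar>c\<bar> + c^2) * e^2"
    by (simp add: algebra_simps)
  finally show "\<bar>2*c*e^2*(b + e*a) + c^2*e^4\<bar> \<le> (6 * \<bar>c\<bar> + c^2) * e^2" .
  also have "\<dots> \<le> (6 * \<bar>c\<bar> + c^2) * e"
    using \<open>e^2 \<le> e\<close> by (intro mult_left_mono) auto
  finally show "\<bar>2*c*e^2*(b + e*a) + c^2*e^4\<bar> \<le> 1/4"
    using assms(3) by (simp add: mult.commute)
qed

lemma expansion_error_terms_le:
  fixes D h e H :: real
  assumes "\<bar>D\<bar> \<le> 8 * e" "\<bar>h\<bar> \<le> H * e^2" "0 \<le> e" "e \<le> 1" "0 \<le> H"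
  shows "\<bar>D\<bar>^3 * \<bar>h\<bar> + \<bar>D\<bar> * h^2 + \<bar>h\<bar>^3 \<le> (512 * H + 8 * H^2 + H^3) * e^5"
proof -
  have "\<bar>D\<bar>^3 * \<bar>h\<bar> \<le> (8 * e)^3 * (H * e^2)"
    using assms by (intro mult_mono power_mono) auto
  moreover have "\<bar>D\<bar> * \<bar>h\<bar>^2 \<le> (8 * e) * (H * e^2)^2"
    using assms by (intro mult_mono power_mono) auto
  moreover have "\<bar>h\<bar>^3 \<le> (H * e^2)^3"
    using assms by (intro power_mono) auto
  moreover have "H^3 * e^6 \<le> H^3 * e^5"
    using assms by (intro mult_left_mono power_decreasing) auto
  ultimately show ?thesis
    by (simp add: algebra_simps eval_nat_numeral)
qed

lemma powr_perturbation_fourth_order: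
  fixes q c :: real
  obtains e0 K where "0 < e0"
    "\<And>e a b n. 0 < e \<Longrightarrow> e \<le> e0 \<Longrightarrow> \<bar>a\<bar> \<le> 2 \<Longrightarrow> \<bar>b\<bar> \<le> 1 \<Longrightarrow> \<bar>n\<bar> \<le> 4 \<Longrightarrow>
      (1 + 2*e*a + e^2*n + (2*c*e^2*(b + e*a) + c^2*e^4)) powr q - (1 + 2*e*a + e^2*n) powr q
      \<le> expansion_main q c e a b n + K * e^5"
proof -
  obtain K where K: "K \<ge> 0"
    "\<And>D h. \<bar>D\<bar> \<le> 1/2 \<Longrightarrow> \<bar>h\<bar> \<le> 1/4 \<Longrightarrow>
       \<bar>(1 + D + h) powr q - (1 + D) powr q
          - (q * (1 + (q - 1) * D + (q - 1) * (q - 2) / 2 * D^2) * h + q * (q - 1) / 2 * h^2)\<bar>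
       \<le> K * (\<bar>D\<bar>^3 * \<bar>h\<bar> + \<bar>D\<bar> * h^2 + \<bar>h\<bar>^3)"
    using powr_second_order_expansion by blast
  obtain B where B: "\<And>e a b n. 0 \<le> e \<Longrightarrow> e \<le> 1 \<Longrightarrow> \<bar>a\<bar> \<le> 2 \<Longrightarrow> \<bar>b\<bar> \<le> 1 \<Longrightarrow> \<bar>n\<bar> \<le> 4 \<Longrightarrow>
    \<bar>expansion_rest q c e a b n\<bar> \<le> B"
    using expansion_rest_bounded by blast
  define H where "H = 6 * \<bar>c\<bar> + c^2"
  have "H \<ge> 0" unfolding H_def by simp
  define e0 where "e0 = min (1/16) (1 / (4 * H + 4))"
  show thesis
  proof (rule that[of e0 "K * (512 * H + 8 * H^2 + H^3) + B"])
    show "0 < e0" using \<open>H \<ge> 0\<close> by (simp add: e0_def add_nonneg_pos)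
    fix e a b n :: real
    assume e: "0 < e" "e \<le> e0" and abn: "\<bar>a\<bar> \<le> 2" "\<bar>b\<bar> \<le> 1" "\<bar>n\<bar> \<le> 4"
    have small: "e \<le> 1/16" "e * H \<le> 1/4"
      using e \<open>H \<ge> 0\<close> by (auto simp: e0_def field_simps add_nonneg_pos)
    define D where "D = 2*e*a + e^2*n"
    define h where "h = 2*c*e^2*(b + e*a) + c^2*e^4"
    have D: "\<bar>D\<bar> \<le> 8 * e" "\<bar>D\<bar> \<le> 1/2" and h: "\<bar>h\<bar> \<le> H * e^2" "\<bar>h\<bar> \<le> 1/4"
      using perturbation_size[of e c a b n] e small abn unfolding D_def h_def H_def by auto
    from K(2)[OF D(2) h(2)] have "(1 + D + h) powr q - (1 + D) powr q
        \<le> expansion_main q c e a b n + e^5 * expansion_rest q c e a b n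
          + K * (\<bar>D\<bar>^3 * \<bar>h\<bar> + \<bar>D\<bar> * h^2 + \<bar>h\<bar>^3)"
      unfolding D_def h_def expansion_split by linarith
    also have "\<dots> \<le> expansion_main q c e a b n + B * e^5 + K * ((512 * H + 8 * H^2 + H^3) * e^5)"
      using B[of e a b n] abn e small \<open>H \<ge> 0\<close> K(1) expansion_error_terms_le[OF D(1) h(1)]
      by (intro add_mono mult_left_mono) (auto simp: mult.commute)
    finally show "(1 + 2*e*a + e^2*n + (2*c*e^2*(b + e*a) + c^2*e^4)) powr q - (1 + 2*e*a + e^2*n) powr q
      \<le> expansion_main q c e a b n + (K * (512 * H + 8 * H^2 + H^3) + B) * e^5"
      by (simp add: D_def h_def algebra_simps)
  qed
qed

section \<open>Trigonometric integrals over a period square\<close>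

abbreviation angle_square :: "(real \<times> real) set" where
  "angle_square \<equiv> cbox (0, 0) (2*pi, 2*pi)"

definition re_sum :: "real \<times> real \<Rightarrow> real" where
  "re_sum x = Re (cis (fst x) + cis (snd x))"

definition re_prod :: "real \<times> real \<Rightarrow> real" where
  "re_prod x = Re (cis (fst x) * cis (snd x))"

definition norm_sum_sq :: "real \<times> real \<Rightarrow> real" where
  "norm_sum_sq x = cmod (cis (fst x) + cis (snd x))^2"

lemma re_sum_trig: "re_sum x = cos (fst x) + cos (snd x)"
  by (simp add: re_sum_def)

lemma re_prod_trig: "re_prod x = cos (fst x) * cos (snd x) - sin (fst x) * sin (snd x)"
  by (simp add: re_prod_def)

lemma norm_sum_sq_trig: "norm_sum_sq x = 2 + 2 * (cos (fst x) * cos (snd x) + sin (fst x) * sin (snd x))"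
proof -
  have "norm_sum_sq x = (cos (fst x) + cos (snd x))^2 + (sin (fst x) + sin (snd x))^2"
    by (simp add: norm_sum_sq_def cmod_power2)
  also have "\<dots> = (sin (fst x)^2 + cos (fst x)^2) + (sin (snd x)^2 + cos (snd x)^2)
      + 2 * (cos (fst x) * cos (snd x) + sin (fst x) * sin (snd x))"
    by algebra
  also have "\<dots> = 2 + 2 * (cos (fst x) * cos (snd x) + sin (fst x) * sin (snd x))"
    by simp
  finally show ?thesis .
qed

lemmas trig_coords = re_sum_trig re_prod_trig norm_sum_sq_trig

lemma abs_re_sum_le: "\<bar>re_sum x\<bar> \<le> 2"
  using abs_Re_le_cmod[of "cis (fst x) + cis (snd x)"] norm_triangle_ineq[of "cis (fst x)" "cis (snd x)"]
  by (simp add: re_sum_def)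

lemma abs_re_prod_le: "\<bar>re_prod x\<bar> \<le> 1"
  using abs_Re_le_cmod[of "cis (fst x) * cis (snd x)"] by (simp add: re_prod_def norm_mult)

lemma abs_norm_sum_sq_le: "\<bar>norm_sum_sq x\<bar> \<le> 4"
proof -
  have "cmod (cis (fst x) + cis (snd x)) \<le> 2"
    using norm_triangle_ineq[of "cis (fst x)" "cis (snd x)"] by simp
  then show ?thesis
    unfolding norm_sum_sq_def using power_mono[of _ 2 2] by fastforce
qed

lemma has_integral_full_period:
  fixes F f :: "real \<Rightarrow> real"
  assumes "\<And>x. (F has_real_derivative f x) (at x)"
  shows "(f has_integral F (2*pi) - F 0) {0..2*pi}"
  by (rule fundamental_theorem_of_calculus)
    (auto simp: has_real_derivative_iff_has_vector_derivative[symmetric]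
          intro: has_field_derivative_at_within assms)

lemma has_integral_trig_monomials:
  shows "((\<lambda>x. 1) has_integral 2*pi) {0..2*pi}"
    and "(cos has_integral 0) {0..2*pi}"
    and "(sin has_integral 0) {0..2*pi}"
    and "((\<lambda>x. cos x ^ 2) has_integral pi) {0..2*pi}"
    and "((\<lambda>x. sin x ^ 2) has_integral pi) {0..2*pi}"
    and "((\<lambda>x. cos x * sin x) has_integral 0) {0..2*pi}"
    and "((\<lambda>x. cos x ^ 3) has_integral 0) {0..2*pi}"
    and "((\<lambda>x. cos x ^ 2 * sin x) has_integral 0) {0..2*pi}"
proof -
  show "((\<lambda>x. 1) has_integral 2*pi) {0..2*pi}"
    using has_integral_const_real[of "1::real" 0 "2*pi"] by simp
  have "(sin has_real_derivative cos x) (at x)"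
    and "((\<lambda>x. - cos x) has_real_derivative sin x) (at x)"
    and "((\<lambda>x. sin x ^ 2 / 2) has_real_derivative cos x * sin x) (at x)"
    and "((\<lambda>x. - (cos x ^ 3) / 3) has_real_derivative cos x ^ 2 * sin x) (at x)" for x
    by (rule derivative_eq_intros refl | simp)+
  moreover have "((\<lambda>x. x/2 + sin (2*x)/4) has_real_derivative cos x ^ 2) (at x)" for x
    by (rule derivative_eq_intros refl | simp)+ (insert cos_double_cos[of x], simp add: field_simps)
  moreover have "((\<lambda>x. x/2 - sin (2*x)/4) has_real_derivative sin x ^ 2) (at x)" for x
    by (rule derivative_eq_intros refl | simp)+ (insert cos_double_sin[of x], simp add: field_simps)
  moreover have "((\<lambda>x. sin x - sin x ^ 3 / 3) has_real_derivative cos x ^ 3) (at x)" for x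
    by (rule derivative_eq_intros refl | simp)+
      (simp add: power3_eq_cube power2_eq_square algebra_simps, simp flip: distrib_left)
  note derivs = calculation this
  show "(cos has_integral 0) {0..2*pi}"
    using has_integral_full_period[OF derivs(1)] by simp
  show "(sin has_integral 0) {0..2*pi}"
    using has_integral_full_period[OF derivs(2)] by simp
  show "((\<lambda>x. cos x * sin x) has_integral 0) {0..2*pi}"
    using has_integral_full_period[OF derivs(3)] by simp
  show "((\<lambda>x. cos x ^ 2 * sin x) has_integral 0) {0..2*pi}"
    using has_integral_full_period[OF derivs(4)] by simp
  show "((\<lambda>x. cos x ^ 2) has_integral pi) {0..2*pi}"
    using has_integral_full_period[OF derivs(5)] by simp
  show "((\<lambda>x. sin x ^ 2) has_integral pi) {0..2*pi}"
    using has_integral_full_period[OF derivs(6)] by simp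
  show "((\<lambda>x. cos x ^ 3) has_integral 0) {0..2*pi}"
    using has_integral_full_period[OF derivs(7)] by simp
qed

lemma has_integral_separable:
  fixes f g :: "real \<Rightarrow> real"
  assumes "continuous_on {a..b} f" "continuous_on {c..d} g"
    and "(f has_integral I) {a..b}" "(g has_integral J) {c..d}"
  shows "((\<lambda>x. f (fst x) * g (snd x)) has_integral I * J) (cbox (a, c) (b, d))"
proof -
  have "continuous_on (cbox (a, c) (b, d)) (\<lambda>x. f (fst x))"
    by (rule continuous_on_compose2[OF assms(1) continuous_on_fst[OF continuous_on_id]])
      (auto simp: cbox_Pair_eq)
  moreover have "continuous_on (cbox (a, c) (b, d)) (\<lambda>x. g (snd x))"
    by (rule continuous_on_compose2[OF assms(2) continuous_on_snd[OF continuous_on_id]])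
      (auto simp: cbox_Pair_eq)
  ultimately have cont: "continuous_on (cbox (a, c) (b, d)) (\<lambda>x. f (fst x) * g (snd x))"
    by (rule continuous_on_mult)
  have "integral (cbox (a, c) (b, d)) (\<lambda>x. f (fst x) * g (snd x))
      = integral {a..b} (\<lambda>s. integral {c..d} (\<lambda>t. f s * g t))"
    using integral_prod_continuous[OF cont] by simp
  also have "\<dots> = I * J"
    using assms(3,4) by (simp add: integral_unique)
  finally show ?thesis
    using integrable_integral[OF integrable_continuous[OF cont]] by simp
qed

lemma has_integral_angle_square_const: "((\<lambda>x. 1) has_integral 4 * pi^2) angle_square"
  using has_integral_separable[OF continuous_on_const continuous_on_const
      has_integral_trig_monomials(1) has_integral_trig_monomials(1)]
  by (simp add: power2_eq_square)

lemma has_integral_re_sum: "(re_sum has_integral 0) angle_square"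
proof -
  have I: "((\<lambda>x. cos (fst x) * 1 + 1 * cos (snd x)) has_integral 0 * (2*pi) + (2*pi) * 0) angle_square"
    by (intro has_integral_add has_integral_separable has_integral_trig_monomials continuous_intros)
  show ?thesis
    by (rule has_integral_eq_rhs[OF has_integral_eq[OF _ I]]) (simp_all add: trig_coords)
qed

lemma has_integral_re_prod: "(re_prod has_integral 0) angle_square"
proof -
  have I: "((\<lambda>x. cos (fst x) * cos (snd x) - sin (fst x) * sin (snd x)) has_integral 0 * 0 - 0 * 0) angle_square"
    by (intro has_integral_diff has_integral_separable has_integral_trig_monomials continuous_intros)
  show ?thesis
    by (rule has_integral_eq_rhs[OF has_integral_eq[OF _ I]]) (simp_all add: trig_coords)
qed

lemma has_integral_re_sum_re_prod: "((\<lambda>x. re_sum x * re_prod x) has_integral 0) angle_square"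
proof -
  have I: "((\<lambda>x. cos (fst x) ^ 2 * cos (snd x) - (cos (fst x) * sin (fst x)) * sin (snd x)
          + cos (fst x) * cos (snd x) ^ 2 - sin (fst x) * (cos (snd x) * sin (snd x)))
        has_integral pi * 0 - 0 * 0 + 0 * pi - 0 * 0) angle_square"
    by (intro has_integral_add has_integral_diff
        has_integral_separable[where f="\<lambda>x. cos x ^ 2" and g=cos]
        has_integral_separable[where f="\<lambda>x. cos x * sin x" and g=sin]
        has_integral_separable[where f=cos and g="\<lambda>x. cos x ^ 2"]
        has_integral_separable[where f=sin and g="\<lambda>x. cos x * sin x"]
        has_integral_trig_monomials continuous_intros)
  show ?thesis
    by (rule has_integral_eq_rhs[OF has_integral_eq[OF _ I]])
      (simp_all add: trig_coords algebra_simps power2_eq_square)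
qed

lemma has_integral_re_sum_sq: "((\<lambda>x. re_sum x ^ 2) has_integral 4 * pi^2) angle_square"
proof -
  have I: "((\<lambda>x. cos (fst x) ^ 2 * 1 + 2 * (cos (fst x) * cos (snd x)) + 1 * cos (snd x) ^ 2)
        has_integral pi * (2*pi) + 2 * (0 * 0) + (2*pi) * pi) angle_square"
    by (intro has_integral_add has_integral_mult_right
        has_integral_separable[where f="\<lambda>x. cos x ^ 2" and g="\<lambda>x. 1"]
        has_integral_separable[where f=cos and g=cos]
        has_integral_separable[where f="\<lambda>x. 1" and g="\<lambda>x. cos x ^ 2"]
        has_integral_trig_monomials continuous_intros)
  show ?thesis
    by (rule has_integral_eq_rhs[OF has_integral_eq[OF _ I]])
      (simp_all add: trig_coords algebra_simps power2_eq_square)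
qed

lemma has_integral_norm_sum_sq_re_prod: "((\<lambda>x. norm_sum_sq x * re_prod x) has_integral 0) angle_square"
proof -
  have I: "((\<lambda>x. 2 * (cos (fst x) * cos (snd x)) - 2 * (sin (fst x) * sin (snd x))
          + 2 * (cos (fst x) ^ 2 * cos (snd x) ^ 2) - 2 * (sin (fst x) ^ 2 * sin (snd x) ^ 2))
        has_integral 2 * (0 * 0) - 2 * (0 * 0) + 2 * (pi * pi) - 2 * (pi * pi)) angle_square"
    by (intro has_integral_add has_integral_diff has_integral_mult_right
        has_integral_separable[where f=cos and g=cos]
        has_integral_separable[where f=sin and g=sin]
        has_integral_separable[where f="\<lambda>x. cos x ^ 2" and g="\<lambda>x. cos x ^ 2"]
        has_integral_separable[where f="\<lambda>x. sin x ^ 2" and g="\<lambda>x. sin x ^ 2"]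
        has_integral_trig_monomials continuous_intros)
  show ?thesis
    by (rule has_integral_eq_rhs[OF has_integral_eq[OF _ I]])
      (simp_all add: trig_coords algebra_simps power2_eq_square)
qed

lemma has_integral_re_prod_sq: "((\<lambda>x. re_prod x ^ 2) has_integral 2 * pi^2) angle_square"
proof -
  have I: "((\<lambda>x. cos (fst x) ^ 2 * cos (snd x) ^ 2 - 2 * ((cos (fst x) * sin (fst x)) * (cos (snd x) * sin (snd x)))
          + sin (fst x) ^ 2 * sin (snd x) ^ 2)
        has_integral pi * pi - 2 * (0 * 0) + pi * pi) angle_square"
    by (intro has_integral_add has_integral_diff has_integral_mult_right
        has_integral_separable[where f="\<lambda>x. cos x * sin x" and g="\<lambda>x. cos x * sin x"]
        has_integral_separable[where f="\<lambda>x. cos x ^ 2" and g="\<lambda>x. cos x ^ 2"]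
        has_integral_separable[where f="\<lambda>x. sin x ^ 2" and g="\<lambda>x. sin x ^ 2"]
        has_integral_trig_monomials continuous_intros)
  show ?thesis
    by (rule has_integral_eq_rhs[OF has_integral_eq[OF _ I]])
      (simp_all add: trig_coords algebra_simps power2_eq_square)
qed

lemma has_integral_re_sum_sq_re_prod: "((\<lambda>x. re_sum x ^ 2 * re_prod x) has_integral 2 * pi^2) angle_square"
proof -
  have I: "((\<lambda>x. cos (fst x) ^ 3 * cos (snd x) - (cos (fst x) ^ 2 * sin (fst x)) * sin (snd x)
          + 2 * (cos (fst x) ^ 2 * cos (snd x) ^ 2) - 2 * ((cos (fst x) * sin (fst x)) * (cos (snd x) * sin (snd x)))
          + cos (fst x) * cos (snd x) ^ 3 - sin (fst x) * (cos (snd x) ^ 2 * sin (snd x)))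
        has_integral 0 * 0 - 0 * 0 + 2 * (pi * pi) - 2 * (0 * 0) + 0 * 0 - 0 * 0) angle_square"
    by (intro has_integral_add has_integral_diff has_integral_mult_right
        has_integral_separable[where f="\<lambda>x. cos x ^ 3" and g=cos]
        has_integral_separable[where f="\<lambda>x. cos x ^ 2 * sin x" and g=sin]
        has_integral_separable[where f="\<lambda>x. cos x ^ 2" and g="\<lambda>x. cos x ^ 2"]
        has_integral_separable[where f="\<lambda>x. cos x * sin x" and g="\<lambda>x. cos x * sin x"]
        has_integral_separable[where f=cos and g="\<lambda>x. cos x ^ 3"]
        has_integral_separable[where f=sin and g="\<lambda>x. cos x ^ 2 * sin x"]
        has_integral_trig_monomials continuous_intros)
  show ?thesis
    by (rule has_integral_eq_rhs[OF has_integral_eq[OF _ I]])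
      (simp_all add: trig_coords algebra_simps power2_eq_square power3_eq_cube)
qed

lemma has_integral_expansion_main:
  "((\<lambda>x. expansion_main q c e (re_sum x) (re_prod x) (norm_sum_sq x))
      has_integral 4 * pi^2 * q^2 * c * (c + 2 * q - 2) * e^4) angle_square"
proof -
  have I: "((\<lambda>x. (2*c*q*e^2) * re_prod x + (2*c*q*e^3) * re_sum x + (q*c^2*e^4) * 1
      + (4*c*q*(q-1)*e^3) * (re_sum x * re_prod x) + (4*c*q*(q-1)*e^4) * re_sum x ^ 2
      + (2*c*q*(q-1)*e^4) * (norm_sum_sq x * re_prod x) + (4*c*q*(q-1)*(q-2)*e^4) * (re_sum x ^ 2 * re_prod x)
      + (2*q*(q-1)*c^2*e^4) * re_prod x ^ 2) has_integral
     (2*c*q*e^2) * 0 + (2*c*q*e^3) * 0 + (q*c^2*e^4) * (4*pi^2) + (4*c*q*(q-1)*e^3) * 0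
      + (4*c*q*(q-1)*e^4) * (4*pi^2) + (2*c*q*(q-1)*e^4) * 0 + (4*c*q*(q-1)*(q-2)*e^4) * (2*pi^2)
      + (2*q*(q-1)*c^2*e^4) * (2*pi^2)) angle_square"
    by (intro has_integral_add has_integral_mult_right has_integral_angle_square_const
        has_integral_re_sum has_integral_re_prod has_integral_re_sum_re_prod has_integral_re_sum_sq
        has_integral_norm_sum_sq_re_prod has_integral_re_sum_sq_re_prod has_integral_re_prod_sq)
  show ?thesis
    by (rule has_integral_eq_rhs[OF has_integral_eq[OF _ I]])
      (simp_all add: expansion_main_def algebra_simps power2_eq_square)
qed

section \<open>Haar measure on the torus\<close>

lemma T2_param_eq: "T2_param x = (cis (fst x), cis (snd x))"
  by (simp add: T2_param_def case_prod_unfold)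

lemma continuous_on_T2_param: "continuous_on UNIV T2_param"
  unfolding T2_param_def case_prod_unfold by (intro continuous_intros)

abbreviation angle_measure :: "(real \<times> real) measure" where
  "angle_measure \<equiv> uniform_measure lborel {0..2*pi} \<Otimes>\<^sub>M uniform_measure lborel {0..2*pi}"

lemma uniform_measure_period_density:
  "uniform_measure lborel {0..2*pi} = density lborel (\<lambda>x. ennreal (indicator {0..2*pi} x / (2*pi)))"
  unfolding uniform_measure_def
  by (rule density_cong) (use divide_ennreal[of 1 "2*pi"] in \<open>auto simp: indicator_def\<close>)

lemma angle_measure_density:
  "angle_measure = density lborel (\<lambda>x. ennreal (indicator angle_square x / (4*pi^2)))"
proof -
  have "sigma_finite_measure (uniform_measure lborel {0..2*pi})"
    by (intro prob_space_imp_sigma_finite prob_space_uniform_measure) auto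
  then have "angle_measure = density (lborel \<Otimes>\<^sub>M lborel)
      (\<lambda>(s, t). ennreal (indicator {0..2*pi} s / (2*pi)) * ennreal (indicator {0..2*pi} t / (2*pi)))"
    unfolding uniform_measure_period_density
    by (intro pair_measure_density lborel.sigma_finite_measure_axioms) auto
  also have "(\<lambda>(s, t). ennreal (indicator {0..2*pi} s / (2*pi)) * ennreal (indicator {0..2*pi} t / (2*pi)))
      = (\<lambda>x. ennreal (indicator angle_square x / (4*pi^2)))"
    by (auto simp: fun_eq_iff indicator_def ennreal_mult'[symmetric] power2_eq_square cbox_Pair_eq)
  finally show ?thesis
    by (simp add: lborel_prod)
qed

lemma sets_angle_measure: "sets angle_measure = sets (borel :: (real \<times> real) measure)"
  by (simp only: angle_measure_density sets_density sets_lborel)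

lemma measurable_T2_param: "T2_param \<in> measurable angle_measure (borel \<Otimes>\<^sub>M borel)"
proof -
  have "T2_param \<in> borel_measurable borel"
    by (rule borel_measurable_continuous_onI[OF continuous_on_T2_param])
  moreover have "sets (borel \<Otimes>\<^sub>M borel :: (complex \<times> complex) measure) = sets borel"
    by (simp only: borel_prod)
  ultimately show ?thesis
    using measurable_cong_sets[OF sets_angle_measure] by blast
qed

lemma integral_angle_measure:
  fixes g :: "real \<times> real \<Rightarrow> real"
  assumes "continuous_on UNIV g"
  shows "integral\<^sup>L angle_measure g = integral angle_square g / (4*pi^2)"
proof -
  have "g \<in> borel_measurable lborel"
    using borel_measurable_continuous_onI[OF assms] by simp
  moreover have "integrable lborel (\<lambda>x. indicator angle_square x *\<^sub>R g x)"
    by (rule borel_integrable_compact) (auto intro: continuous_on_subset[OF assms])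
  ultimately have "integral\<^sup>L angle_measure g = (LINT x : angle_square | lborel. g x) / (4*pi^2)"
    unfolding angle_measure_density
    by (subst integral_density) (auto simp: set_lebesgue_integral_def)
  also have "\<dots> = integral angle_square g / (4*pi^2)"
    using set_borel_integral_eq_integral(2)[of angle_square g]
      \<open>integrable lborel (\<lambda>x. indicator angle_square x *\<^sub>R g x)\<close>
    by (simp add: set_integrable_def)
  finally show ?thesis .
qed

lemma integral_haar_T2:
  fixes F :: "complex \<times> complex \<Rightarrow> real"
  assumes "continuous_on UNIV F"
  shows "(\<integral>z. F z \<partial>haar_T2) = integral angle_square (\<lambda>x. F (T2_param x)) / (4*pi^2)"
proof -
  have "continuous_on UNIV (\<lambda>x. F (T2_param x))"
    by (rule continuous_on_compose2[OF assms continuous_on_T2_param]) auto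
  moreover have "F \<in> borel_measurable (borel \<Otimes>\<^sub>M borel)"
    unfolding borel_prod using borel_measurable_continuous_onI[OF assms] .
  ultimately show ?thesis
    unfolding haar_T2_def by (simp add: integral_distr[OF measurable_T2_param] integral_angle_measure)
qed

lemma AE_haar_T2_iff:
  fixes F :: "complex \<times> complex \<Rightarrow> real"
  assumes "continuous_on UNIV F"
  shows "(AE z in haar_T2. F z \<le> C) \<longleftrightarrow> (AE x in angle_measure. F (T2_param x) \<le> C)"
proof -
  have "F \<in> borel_measurable (borel \<Otimes>\<^sub>M borel)"
    unfolding borel_prod using borel_measurable_continuous_onI[OF assms] .
  then have "{z \<in> space (borel \<Otimes>\<^sub>M borel). F z \<le> C} \<in> sets (borel \<Otimes>\<^sub>M borel)"
    by measurable
  then show ?thesis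
    unfolding haar_T2_def by (rule AE_distr_iff[OF measurable_T2_param])
qed

lemma emeasure_angle_measure_square_pos:
  assumes "0 < \<delta>" "\<delta> \<le> 2*pi"
  shows "emeasure angle_measure ({0..\<delta>} \<times> {0..\<delta>}) > 0"
proof -
  have "sigma_finite_measure (uniform_measure lborel {0..2*pi})"
    by (intro prob_space_imp_sigma_finite prob_space_uniform_measure) auto
  then have "emeasure angle_measure ({0..\<delta>} \<times> {0..\<delta>})
      = emeasure (uniform_measure lborel {0..2*pi}) {0..\<delta>} * emeasure (uniform_measure lborel {0..2*pi}) {0..\<delta>}"
    by (rule sigma_finite_measure.emeasure_pair_measure_Times) auto
  moreover have "emeasure (uniform_measure lborel {0..2*pi}) {0..\<delta>} = ennreal \<delta> / ennreal (2*pi)"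
    using assms by (simp add: emeasure_uniform_measure Int_absorb1)
  moreover have "ennreal \<delta> / ennreal (2*pi) > 0"
    using assms divide_ennreal[of \<delta> "2*pi"] by simp
  ultimately show ?thesis
    by (simp add: ennreal_zero_less_mult_iff)
qed

section \<open>The $L^p$ inequality\<close>

lemma norm_perturbation_cis_sq:
  "cmod (1 + of_real e * (cis s + cis t) + of_real (c * e^2) * cis s * cis t)^2
   = 1 + 2 * e * (cos s + cos t) + e^2 * (2 + 2 * (cos s * cos t + sin s * sin t))
     + (2 * c * e^2 * ((cos s * cos t - sin s * sin t) + e * (cos s + cos t)) + c^2 * e^4)"
proof -
  have "(1 + e * (ca + cb) + (c * e^2 * ca * cb - c * e^2 * sa * sb))^2
        + (e * (sa + sb) + (c * e^2 * ca * sb + c * e^2 * sa * cb))^2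
      = 1 + 2 * e * (ca + cb) + e^2 * (2 + 2 * (ca * cb + sa * sb))
        + (2 * c * e^2 * ((ca * cb - sa * sb) + e * (ca + cb)) + c^2 * e^4)"
    if "sa^2 + ca^2 = 1" "sb^2 + cb^2 = 1" for ca sa cb sb :: real
    using that by algebra
  from this[of "sin s" "cos s" "sin t" "cos t"] show ?thesis
    by (simp add: cis.ctr cmod_power2)
qed

lemma norm_perturbation_T2_param_sq:
  "cmod ((\<lambda>(z1, z2). 1 + of_real e * (z1 + z2) + of_real (c * e^2) * z1 * z2) (T2_param x))^2
   = 1 + 2*e*re_sum x + e^2*norm_sum_sq x + (2*c*e^2*(re_prod x + e*re_sum x) + c^2*e^4)"
  by (simp only: T2_param_eq prod.case norm_perturbation_cis_sq trig_coords)

lemma powr_eq_square_powr_half: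
  fixes y p :: real
  assumes "0 \<le> y"
  shows "y powr p = (y^2) powr (p/2)"
proof (cases "y = 0")
  case False
  with assms have "(y^2) powr (p/2) = (y powr 2) powr (p/2)"
    by (simp add: powr_realpow)
  also have "\<dots> = y powr p"
    by (simp add: powr_powr)
  finally show ?thesis by simp
qed simp

lemma continuous_on_norm_powr:
  fixes f :: "'a::topological_space \<Rightarrow> 'b::real_normed_vector"
  assumes "continuous_on UNIV f" "p > 0"
  shows "continuous_on UNIV (\<lambda>z. norm (f z) powr p)"
  using assms by (intro continuous_on_powr' continuous_intros) auto

lemma Lp_norm_T2_less:
  fixes f g :: "complex \<times> complex \<Rightarrow> complex"
  assumes "p > 0" "continuous_on UNIV f" "continuous_on UNIV g"
    and "integral angle_square (\<lambda>x. cmod (f (T2_param x)) powr p)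
       < integral angle_square (\<lambda>x. cmod (g (T2_param x)) powr p)"
  shows "Lp_norm_T2 p f < Lp_norm_T2 p g"
proof -
  have "(\<integral>z. cmod (f z) powr p \<partial>haar_T2) < (\<integral>z. cmod (g z) powr p \<partial>haar_T2)"
    using assms
    by (simp add: integral_haar_T2 continuous_on_norm_powr divide_strict_right_mono)
  moreover have "0 \<le> (\<integral>z. cmod (f z) powr p \<partial>haar_T2)"
    by (rule integral_nonneg_AE) simp
  ultimately show ?thesis
    unfolding Lp_norm_T2_def using assms(1) by (intro powr_less_mono2) auto
qed

lemma integral_diff_le:
  fixes f g h :: "'a::euclidean_space \<Rightarrow> real"
  assumes "f integrable_on S" "g integrable_on S" "(h has_integral I) S"
    and "\<And>x. x \<in> S \<Longrightarrow> f x - g x \<le> h x"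
  shows "integral S f - integral S g \<le> I"
proof -
  have "integral S f - integral S g = integral S (\<lambda>x. f x - g x)"
    using assms(1,2) by (simp add: integral_diff)
  also have "\<dots> \<le> I"
    using assms by (intro has_integral_le[OF integrable_integral]) (auto intro: integrable_diff)
  finally show ?thesis .
qed

lemma norm_perturbation_T2_param_powr:
  "cmod ((\<lambda>(z1, z2). 1 + of_real e * (z1 + z2) + of_real (c * e^2) * z1 * z2) (T2_param x)) powr p
   = (1 + 2*e*re_sum x + e^2*norm_sum_sq x + (2*c*e^2*(re_prod x + e*re_sum x) + c^2*e^4)) powr (p/2)"
  by (subst powr_eq_square_powr_half[OF norm_ge_zero]) (simp only: norm_perturbation_T2_param_sq)

lemma integrable_norm_T2_param_powr:
  fixes f :: "complex \<times> complex \<Rightarrow> complex"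
  assumes "continuous_on UNIV f" "p > 0"
  shows "(\<lambda>x. cmod (f (T2_param x)) powr p) integrable_on angle_square"
proof -
  have "continuous_on UNIV (\<lambda>x. f (T2_param x))"
    by (rule continuous_on_compose2[OF assms(1) continuous_on_T2_param]) auto
  with assms(2) show ?thesis
    by (intro integrable_continuous continuous_on_subset[OF continuous_on_norm_powr]) auto
qed

lemma integral_perturbation_gap_bound:
  fixes p c :: real
  assumes "p > 0"
  obtains e0 K where "0 < e0"
    "\<And>e. 0 < e \<Longrightarrow> e \<le> e0 \<Longrightarrow>
      integral angle_square
        (\<lambda>x. cmod ((\<lambda>(z1, z2). 1 + of_real e * (z1 + z2) + of_real (c * e^2) * z1 * z2) (T2_param x)) powr p)
      - integral angle_square (\<lambda>x. cmod ((\<lambda>(z1, z2). 1 + of_real e * (z1 + z2)) (T2_param x)) powr p)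
      \<le> 4 * pi^2 * e^4 * ((p/2)^2 * c * (c + p - 2) + K * e)"
proof -
  define q where "q = p/2"
  obtain e0 K :: real where "0 < e0" and fourth_order:
    "\<And>e a b n :: real. 0 < e \<Longrightarrow> e \<le> e0 \<Longrightarrow> \<bar>a\<bar> \<le> 2 \<Longrightarrow> \<bar>b\<bar> \<le> 1 \<Longrightarrow> \<bar>n\<bar> \<le> 4 \<Longrightarrow>
      (1 + 2*e*a + e^2*n + (2*c*e^2*(b + e*a) + c^2*e^4)) powr q - (1 + 2*e*a + e^2*n) powr q
      \<le> expansion_main q c e a b n + K * e^5"
    using powr_perturbation_fourth_order[where q = q and c = c] by metis
  show thesis
  proof (rule that[of e0 K, OF \<open>0 < e0\<close>])
    fix e :: real assume e: "0 < e" "e \<le> e0"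
    have "integral angle_square
        (\<lambda>x. cmod ((\<lambda>(z1, z2). 1 + of_real e * (z1 + z2) + of_real (c * e^2) * z1 * z2) (T2_param x)) powr p)
      - integral angle_square (\<lambda>x. cmod ((\<lambda>(z1, z2). 1 + of_real e * (z1 + z2)) (T2_param x)) powr p)
      \<le> 4 * pi^2 * q^2 * c * (c + 2 * q - 2) * e^4 + K * e^5 * (4 * pi^2)"
    proof (rule integral_diff_le)
      show "((\<lambda>x. expansion_main q c e (re_sum x) (re_prod x) (norm_sum_sq x) + K * e^5) has_integral
          4 * pi^2 * q^2 * c * (c + 2 * q - 2) * e^4 + K * e^5 * (4 * pi^2)) angle_square"
        using has_integral_add[OF has_integral_expansion_main
            has_integral_mult_right[OF has_integral_angle_square_const, of "K * e^5"]] by simp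
      fix x
      show "cmod ((\<lambda>(z1, z2). 1 + of_real e * (z1 + z2) + of_real (c * e^2) * z1 * z2) (T2_param x)) powr p
          - cmod ((\<lambda>(z1, z2). 1 + of_real e * (z1 + z2)) (T2_param x)) powr p
          \<le> expansion_main q c e (re_sum x) (re_prod x) (norm_sum_sq x) + K * e^5"
        using norm_perturbation_T2_param_powr[of e c x p] norm_perturbation_T2_param_powr[of e 0 x p]
          fourth_order[OF e abs_re_sum_le abs_re_prod_le abs_norm_sum_sq_le]
        by (simp add: q_def)
    qed (use \<open>p > 0\<close> in \<open>auto simp: case_prod_unfold intro!: integrable_norm_T2_param_powr continuous_intros\<close>)
    also have "\<dots> = 4 * pi^2 * e^4 * (q^2 * c * (c + 2 * q - 2) + K * e)"
      by (simp add: algebra_simps eval_nat_numeral)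
    also have "q^2 * c * (c + 2 * q - 2) = (p/2)^2 * c * (c + p - 2)"
      by (simp add: q_def)
    finally show "integral angle_square
        (\<lambda>x. cmod ((\<lambda>(z1, z2). 1 + of_real e * (z1 + z2) + of_real (c * e^2) * z1 * z2) (T2_param x)) powr p)
      - integral angle_square (\<lambda>x. cmod ((\<lambda>(z1, z2). 1 + of_real e * (z1 + z2)) (T2_param x)) powr p)
      \<le> 4 * pi^2 * e^4 * ((p/2)^2 * c * (c + p - 2) + K * e)" .
  qed
qed

lemma eventually_integral_perturbation_less:
  fixes p c :: real
  assumes "p > 0" and "c * (c + p - 2) < 0"
  shows "\<forall>\<^sub>F e in at_right 0.
    integral angle_square
      (\<lambda>x. cmod ((\<lambda>(z1, z2). 1 + of_real e * (z1 + z2) + of_real (c * e^2) * z1 * z2) (T2_param x)) powr p)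
    < integral angle_square (\<lambda>x. cmod ((\<lambda>(z1, z2). 1 + of_real e * (z1 + z2)) (T2_param x)) powr p)"
proof -
  obtain e0 K where "0 < e0" and gap:
    "\<And>e. 0 < e \<Longrightarrow> e \<le> e0 \<Longrightarrow>
      integral angle_square
        (\<lambda>x. cmod ((\<lambda>(z1, z2). 1 + of_real e * (z1 + z2) + of_real (c * e^2) * z1 * z2) (T2_param x)) powr p)
      - integral angle_square (\<lambda>x. cmod ((\<lambda>(z1, z2). 1 + of_real e * (z1 + z2)) (T2_param x)) powr p)
      \<le> 4 * pi^2 * e^4 * ((p/2)^2 * c * (c + p - 2) + K * e)"
    using integral_perturbation_gap_bound[OF \<open>p > 0\<close>, where c = c] by blast
  have "(p/2)^2 * (c * (c + p - 2)) < 0"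
    by (rule mult_pos_neg) (use assms in auto)
  moreover have "((\<lambda>e. K * e) \<longlongrightarrow> 0) (at_right 0)"
    by (rule tendsto_mult_right_zero) (rule tendsto_ident_at)
  ultimately have "\<forall>\<^sub>F e in at_right 0. K * e < - ((p/2)^2 * (c * (c + p - 2)))"
    by (intro order_tendstoD(2)) auto
  then have "\<forall>\<^sub>F e in at_right 0. (p/2)^2 * c * (c + p - 2) + K * e < 0"
    by (rule eventually_mono) (simp add: mult.assoc)
  moreover have "\<forall>\<^sub>F e in at_right (0::real). 0 < e \<and> e < e0"
    using \<open>0 < e0\<close> by (auto simp: eventually_at_right_field)
  ultimately show ?thesis
  proof eventually_elim
    case (elim e)
    then have "4 * pi^2 * e^4 * ((p/2)^2 * c * (c + p - 2) + K * e) < 0"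
      by (intro mult_pos_neg) auto
    with gap[of e] elim show ?case by simp
  qed
qed

lemma eventually_Lp_norm_T2_perturbation_less:
  fixes p c :: real
  assumes "p > 0" and "c * (c + p - 2) < 0"
  shows "\<forall>\<^sub>F e in at_right 0.
    Lp_norm_T2 p (\<lambda>(z1, z2). 1 + of_real e * (z1 + z2) + of_real (c * e^2) * z1 * z2)
    < Lp_norm_T2 p (\<lambda>(z1, z2). 1 + of_real e * (z1 + z2))"
  using eventually_integral_perturbation_less[OF assms]
  by (rule eventually_mono)
    (rule Lp_norm_T2_less; use assms(1) in \<open>auto simp: case_prod_unfold intro!: continuous_intros\<close>)

section \<open>The essential supremum inequality\<close>

lemma Linf_norm_T2_le:
  fixes f :: "complex \<times> complex \<Rightarrow> complex"
  assumes "continuous_on UNIV f" and "\<And>x. cmod (f (T2_param x)) \<le> C"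
  shows "Linf_norm_T2 f \<le> ereal C"
  unfolding Linf_norm_T2_def
proof (rule esssup_I)
  have "continuous_on UNIV (\<lambda>z. cmod (f z))"
    using assms(1) by (intro continuous_intros)
  then have "(\<lambda>z. cmod (f z)) \<in> borel_measurable borel"
    by (rule borel_measurable_continuous_onI)
  then show "(\<lambda>z. ereal (cmod (f z))) \<in> borel_measurable haar_T2"
    using measurable_cong_sets[OF _ refl, of haar_T2 borel] by (simp add: haar_T2_def borel_prod)
  have "AE z in haar_T2. cmod (f z) \<le> C"
    using AE_haar_T2_iff[OF \<open>continuous_on UNIV (\<lambda>z. cmod (f z))\<close>] assms(2) by simp
  then show "AE z in haar_T2. ereal (cmod (f z)) \<le> ereal C"
    by simp
qed

lemma less_Linf_norm_T2:
  fixes f :: "complex \<times> complex \<Rightarrow> complex"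
  assumes "continuous_on UNIV f" and "0 < \<delta>" "\<delta> \<le> 2*pi"
    and "\<And>x. x \<in> {0..\<delta>} \<times> {0..\<delta>} \<Longrightarrow> C < cmod (f (T2_param x))"
  shows "ereal C < Linf_norm_T2 f"
proof (rule ccontr)
  have cont: "continuous_on UNIV (\<lambda>z. cmod (f z))"
    using assms(1) by (intro continuous_intros)
  assume "\<not> ereal C < Linf_norm_T2 f"
  then have le: "esssup haar_T2 (\<lambda>z. ereal (cmod (f z))) \<le> ereal C"
    unfolding Linf_norm_T2_def by simp
  have "AE z in haar_T2. ereal (cmod (f z)) \<le> ereal C"
    using esssup_AE by (rule eventually_mono) (rule order_trans[OF _ le])
  then have "AE x in angle_measure. cmod (f (T2_param x)) \<le> C"
    using AE_haar_T2_iff[OF cont] by simp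
  moreover have bad_set: "{x \<in> space angle_measure. \<not> cmod (f (T2_param x)) \<le> C} \<in> sets angle_measure"
  proof -
    have "continuous_on UNIV (\<lambda>x. cmod (f (T2_param x)))"
      by (rule continuous_on_compose2[OF cont continuous_on_T2_param]) auto
    then have "(\<lambda>x. cmod (f (T2_param x))) \<in> borel_measurable angle_measure"
      using borel_measurable_continuous_onI measurable_cong_sets[OF sets_angle_measure refl] by blast
    then show ?thesis by measurable
  qed
  ultimately have "emeasure angle_measure {x \<in> space angle_measure. \<not> cmod (f (T2_param x)) \<le> C} = 0"
    by (simp add: AE_iff_measurable)
  moreover have "{0..\<delta>} \<times> {0..\<delta>} \<subseteq> {x \<in> space angle_measure. \<not> cmod (f (T2_param x)) \<le> C}"
    using assms(4) by (auto simp: not_le space_pair_measure)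
  then have "emeasure angle_measure ({0..\<delta>} \<times> {0..\<delta>})
      \<le> emeasure angle_measure {x \<in> space angle_measure. \<not> cmod (f (T2_param x)) \<le> C}"
    by (rule emeasure_mono[OF _ bad_set])
  ultimately show False
    using emeasure_angle_measure_square_pos[OF assms(2,3)] by simp
qed

lemma cos_ge_one_minus_sq_half: "1 - x^2 / 2 \<le> cos (x::real)"
proof -
  have "\<bar>sin (x/2)\<bar>^2 \<le> \<bar>x/2\<bar>^2"
    by (intro power_mono abs_sin_x_le_abs_x) simp
  then show ?thesis
    using cos_double_sin[of "x/2"] by (simp add: power2_eq_square)
qed

lemma norm_one_plus_sum_minus_prod_cis_sq:
  "cmod (1 + cis s + cis t - cis s * cis t)^2 = 4 + 4 * sin s * sin t"
proof -
  have "(1 + ca + cb - (ca * cb - sa * sb))^2 + (sa + sb - (ca * sb + sa * cb))^2 = 4 + 4 * sa * sb"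
    if "sa^2 + ca^2 = 1" "sb^2 + cb^2 = 1" for ca sa cb sb :: real
    using that by algebra
  from this[of "sin s" "cos s" "sin t" "cos t"] show ?thesis
    by (simp add: cis.ctr cmod_power2)
qed

lemma norm_one_plus_sum_minus_prod_le:
  "cmod ((\<lambda>(z1, z2). 1 + z1 + z2 - z1 * z2) (T2_param x)) \<le> 29/10"
proof -
  have "sin (fst x) * sin (snd x) \<le> 1"
    using abs_sin_le_one[of "fst x"] abs_sin_le_one[of "snd x"]
    by (metis abs_le_D1 abs_mult mult_le_one abs_ge_zero)
  have "cmod ((\<lambda>(z1, z2). 1 + z1 + z2 - z1 * z2) (T2_param x))^2 = 4 + 4 * (sin (fst x) * sin (snd x))"
    by (simp add: T2_param_eq norm_one_plus_sum_minus_prod_cis_sq mult.assoc)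
  also have "\<dots> \<le> (29/10)^2"
    using \<open>sin (fst x) * sin (snd x) \<le> 1\<close> by (simp add: power2_eq_square)
  finally show ?thesis
    by (rule power2_le_imp_le) simp
qed

lemma norm_one_plus_sum_gt:
  assumes "x \<in> {0..1/4} \<times> {0..1/4}"
  shows "29/10 < cmod ((\<lambda>(z1, z2). 1 + z1 + z2) (T2_param x))"
proof -
  have "fst x ^ 2 \<le> 1/16" "snd x ^ 2 \<le> 1/16"
    using assms mult_mono[of "fst x" "1/4" "fst x" "1/4"] mult_mono[of "snd x" "1/4" "snd x" "1/4"]
    by (auto simp: mem_Times_iff power2_eq_square)
  then have "31/32 \<le> cos (fst x)" "31/32 \<le> cos (snd x)"
    using cos_ge_one_minus_sq_half[of "fst x"] cos_ge_one_minus_sq_half[of "snd x"] by linarith+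
  moreover have "Re (1 + cis (fst x) + cis (snd x)) \<le> cmod (1 + cis (fst x) + cis (snd x))"
    by (rule complex_Re_le_cmod)
  ultimately show ?thesis
    by (simp add: T2_param_eq)
qed

lemma Linf_norm_T2_sum_minus_prod_less:
  "Linf_norm_T2 (\<lambda>(z1, z2). 1 + z1 + z2 - z1 * z2) < Linf_norm_T2 (\<lambda>(z1, z2). 1 + z1 + z2)"
proof -
  have "Linf_norm_T2 (\<lambda>(z1, z2). 1 + z1 + z2 - z1 * z2) \<le> ereal (29/10)"
  proof (rule Linf_norm_T2_le)
    show "continuous_on UNIV (\<lambda>(z1, z2). 1 + z1 + z2 - z1 * z2 :: complex)"
      unfolding case_prod_unfold by (intro continuous_intros)
  qed (fact norm_one_plus_sum_minus_prod_le)
  also have "ereal (29/10) < Linf_norm_T2 (\<lambda>(z1, z2). 1 + z1 + z2)"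
  proof (rule less_Linf_norm_T2[where \<delta> = "1/4"])
    show "continuous_on UNIV (\<lambda>(z1, z2). 1 + z1 + z2 :: complex)"
      unfolding case_prod_unfold by (intro continuous_intros)
    show "0 < (1/4::real)" "1/4 \<le> 2 * pi"
      using pi_gt3 by simp_all
  qed (rule norm_one_plus_sum_gt)
  finally show ?thesis .
qed

theorem lemma2p2:
  fixes p :: real
  assumes "1 \<le> p" and "p \<noteq> 2"
  shows "(\<forall>\<^sub>F \<epsilon> in at_right (0::real).
            Lp_norm_T2 p (\<lambda>(z1, z2). 1 + of_real \<epsilon> * (z1 + z2)
                                  + of_real ((1 - p/2) * \<epsilon>\<^sup>2) * z1 * z2)
          < Lp_norm_T2 p (\<lambda>(z1, z2). 1 + of_real \<epsilon> * (z1 + z2)))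
       \<and> Linf_norm_T2 (\<lambda>(z1, z2). 1 + z1 + z2 - z1 * z2)
          < Linf_norm_T2 (\<lambda>(z1, z2). 1 + z1 + z2)"
proof
  have "(1 - p/2) * ((1 - p/2) + p - 2) = - ((1 - p/2)^2)"
    by (simp add: power2_eq_square algebra_simps)
  also have "\<dots> < 0"
    using assms(2) by simp
  finally show "\<forall>\<^sub>F \<epsilon> in at_right (0::real).
            Lp_norm_T2 p (\<lambda>(z1, z2). 1 + of_real \<epsilon> * (z1 + z2)
                                  + of_real ((1 - p/2) * \<epsilon>\<^sup>2) * z1 * z2)
          < Lp_norm_T2 p (\<lambda>(z1, z2). 1 + of_real \<epsilon> * (z1 + z2))"
    using assms(1) by (intro eventually_Lp_norm_T2_perturbation_less) auto
qed (rule Linf_norm_T2_sum_minus_prod_less)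

end
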